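(* Let $S$ be a compact Hausdorff space and $K\subset S$ a closed subset which is a retract of $S$ and is a zero-set of $S$. Then there exists a U-embedding from $C(K)$ into $C(S)$.
   Context: $C(K)$, $C(S)$ carry the sup norm. $K$ is a retract of $S$ if there is a continuous onto $r\colon S\to K$ with $r(k)=k$ for all $k\in K$. $K$ is a zero-set of $S$ if $K=\{t\in S: f(t)=0\}$ for some $f\in C(S)$. A linear isometry $T\colon X\to Y$ is a U-embedding if every $x^*\in X^*$ has a unique $y^*\in Y^*$ with $T^*(y^* )=x^*$ and $\|y^*\|=\|x^*\|$. *)

theory Defs
  imports "HOL-Analysis.Analysis"
begin

definition U_embedding :: "('a::real_normed_vector \<Rightarrow>\<^sub>L 'b::real_normed_vector) \<Rightarrow> bool" where
  "U_embedding T \<longleftrightarrow>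
     (\<forall>x. norm (T x) = norm x) \<and>
     (\<forall>xs :: 'a \<Rightarrow>\<^sub>L real. \<exists>!ys :: 'b \<Rightarrow>\<^sub>L real. ys o\<^sub>L T = xs \<and> norm ys = norm xs)"

definition zero_set_of :: "'a set \<Rightarrow> 'a topology \<Rightarrow> bool" where
  "zero_set_of K X \<longleftrightarrow>
     (\<exists>f. continuous_map X euclideanreal f \<and> K = {t \<in> topspace X. f t = 0})"

end

theory Submission
  imports Defs
begin

text \<open>Let \<open>\<rho>\<close> be a retraction of \<open>S\<close> onto \<open>K\<close> and \<open>h : S \<rightarrow> [0,1]\<close> a continuous
function whose zero set is \<open>K\<close>. The operator \<open>T f = (f \<circ> \<rho>) \<cdot> (1 - h)\<close> is an isometry
\<open>C(K) \<rightarrow> C(S)\<close> with restriction to \<open>K\<close> as a contractive left inverse, so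
\<open>x\<^sup>* \<mapsto> x\<^sup>* \<circ> restriction\<close> gives norm-preserving extensions. For uniqueness it suffices
that a functional \<open>\<phi>\<close> on \<open>C(S)\<close> with \<open>\<parallel>\<phi>\<parallel> = \<parallel>\<phi> \<circ> T\<parallel>\<close> kills every \<open>d\<close> vanishing on \<open>K\<close>.
Such a \<open>d\<close> is uniformly approximated by functions \<open>d'\<close> with \<open>\<bar>d'\<bar> \<le> n h\<close>. If
\<open>\<phi> d' > 0\<close>, pick \<open>f\<close> in the unit ball with \<open>\<phi> (T f) > \<parallel>\<phi>\<parallel> - \<phi> d' / n\<close>: the damping
by \<open>1 - h\<close> keeps \<open>T f + d' / n\<close> in the unit ball, yet \<open>\<phi>\<close> exceeds \<open>\<parallel>\<phi>\<parallel>\<close> on it.\<close>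

lemma retraction_left_inverse_of_embedding:
  assumes "embedding_map X Y i" and "i ` topspace X retract_of_space Y"
  obtains \<rho> where "continuous_map Y X \<rho>" and "\<And>x. x \<in> topspace X \<Longrightarrow> \<rho> (i x) = x"
proof -
  obtain g where g: "homeomorphic_maps X (subtopology Y (i ` topspace X)) i g"
    using assms(1) unfolding embedding_map_def homeomorphic_map_maps by blast
  obtain r where r: "continuous_map Y (subtopology Y (i ` topspace X)) r"
    and r_id: "\<And>y. y \<in> i ` topspace X \<Longrightarrow> r y = y"
    using assms(2) unfolding retract_of_space_def by blast
  have "continuous_map Y X (g \<circ> r)"
    using continuous_map_compose[OF r] g unfolding homeomorphic_maps_def by blast
  moreover have "(g \<circ> r) (i x) = x" if "x \<in> topspace X" for x
    using g r_id that by (simp add: homeomorphic_maps_def)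
  ultimately show thesis using that by blast
qed

lemma embedding_map_imp_continuous_map:
  assumes "embedding_map X Y f"
  shows "continuous_map X Y f"
  using assms unfolding embedding_map_def
  by (metis homeomorphic_imp_continuous_map continuous_map_in_subtopology)

lemma zero_set_ofE:
  assumes "zero_set_of K X"
  obtains h where "continuous_map X euclideanreal h" and "\<And>t. 0 \<le> h t" and "\<And>t. h t \<le> 1"
    and "K = {t \<in> topspace X. h t = 0}"
proof -
  obtain f where f: "continuous_map X euclideanreal f" and K: "K = {t \<in> topspace X. f t = 0}"
    using assms unfolding zero_set_of_def by blast
  have "continuous_map X euclideanreal (\<lambda>t. min 1 \<bar>f t\<bar>)"
    using f by (intro continuous_intros) auto
  moreover have "K = {t \<in> topspace X. min 1 \<bar>f t\<bar> = 0}"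
    using K by auto
  ultimately show thesis using that[of "\<lambda>t. min 1 \<bar>f t\<bar>"] by auto
qed

lemma norm_blinfun_almost_attained:
  fixes \<psi> :: "'a::real_normed_vector \<Rightarrow>\<^sub>L real"
  assumes "0 < \<epsilon>"
  obtains x where "norm x \<le> 1" and "norm \<psi> - \<epsilon> < \<psi> x"
proof -
  have "\<exists>x. norm x \<le> 1 \<and> norm \<psi> - \<epsilon> < \<psi> x"
  proof (rule ccontr)
    assume "\<nexists>x. norm x \<le> 1 \<and> norm \<psi> - \<epsilon> < \<psi> x"
    then have below: "\<psi> x \<le> norm \<psi> - \<epsilon>" if "norm x \<le> 1" for x
      using that by (meson not_le)
    have "0 \<le> norm \<psi> - \<epsilon>"
      using below[of 0] by simp
    then have "norm \<psi> \<le> norm \<psi> - \<epsilon>"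
    proof (rule norm_blinfun_bound)
      fix x :: 'a
      show "norm (\<psi> x) \<le> (norm \<psi> - \<epsilon>) * norm x"
      proof (cases "x = 0")
        case False
        define u where "u = x /\<^sub>R norm x"
        have "norm u = 1" "norm (- u) = 1"
          using False by (simp_all add: u_def)
        then have "\<bar>\<psi> u\<bar> \<le> norm \<psi> - \<epsilon>"
          using below[of u] below[of "- u"] by (simp add: blinfun.bilinear_simps)
        moreover have "\<psi> x = norm x * \<psi> u"
          using False by (simp add: u_def blinfun.bilinear_simps)
        ultimately show ?thesis
          by (simp add: abs_mult mult.commute mult_left_mono)
      qed simp
    qed
    then show False
      using assms by simp
  qed
  then show thesis
    using that by blast
qed

lemma U_embeddingI:
  fixes T :: "'a::real_normed_vector \<Rightarrow>\<^sub>L 'b::real_normed_vector" and R :: "'b \<Rightarrow>\<^sub>L 'a"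
  assumes isometric: "\<And>x. norm (T x) = norm x"
    and left_inverse: "\<And>x. R (T x) = x"
    and norm_R: "norm R \<le> 1"
    and annihilates_kernel:
      "\<And>(\<phi> :: 'b \<Rightarrow>\<^sub>L real) y. norm \<phi> \<le> norm (\<phi> o\<^sub>L T) \<Longrightarrow> R y = 0 \<Longrightarrow> \<phi> y = 0"
  shows "U_embedding T"
  unfolding U_embedding_def
proof (intro conjI allI isometric)
  have norm_T: "norm T \<le> 1"
    by (rule norm_blinfun_bound) (simp_all add: isometric)
  fix \<xi> :: "'a \<Rightarrow>\<^sub>L real"
  show "\<exists>!\<eta>. \<eta> o\<^sub>L T = \<xi> \<and> norm \<eta> = norm \<xi>"
  proof (rule ex1I[of _ "\<xi> o\<^sub>L R"])
    have extends: "(\<xi> o\<^sub>L R) o\<^sub>L T = \<xi>"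
      by (rule blinfun_eqI) (simp add: left_inverse)
    have "norm (\<xi> o\<^sub>L R) \<le> norm \<xi>"
      using norm_blinfun_compose[of \<xi> R] norm_R
      by (metis mult.right_neutral mult_left_mono norm_ge_zero order_trans)
    moreover have "norm \<xi> \<le> norm (\<xi> o\<^sub>L R)"
      using norm_blinfun_compose[of "\<xi> o\<^sub>L R" T] norm_T extends
      by (metis mult.right_neutral mult_left_mono norm_ge_zero order_trans)
    ultimately show "(\<xi> o\<^sub>L R) o\<^sub>L T = \<xi> \<and> norm (\<xi> o\<^sub>L R) = norm \<xi>"
      using extends by simp
  next
    fix \<eta> assume \<eta>: "\<eta> o\<^sub>L T = \<xi> \<and> norm \<eta> = norm \<xi>"
    show "\<eta> = \<xi> o\<^sub>L R"
    proof (rule blinfun_eqI)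
      fix y
      have "R (y - T (R y)) = 0"
        by (simp add: blinfun.bilinear_simps left_inverse)
      then have "\<eta> (y - T (R y)) = 0"
        using \<eta> by (intro annihilates_kernel) simp
      then have "\<eta> y = \<eta> (T (R y))"
        by (simp add: blinfun.bilinear_simps)
      also have "\<dots> = \<xi> (R y)"
        using \<eta> by (metis blinfun_apply_blinfun_compose)
      finally show "\<eta> y = (\<xi> o\<^sub>L R) y"
        by simp
    qed
  qed
qed

lemma compact_continuous_pos_bounded_below:
  fixes h :: "'a::topological_space \<Rightarrow> real"
  assumes "compact C" and "continuous_on C h" and "\<And>s. s \<in> C \<Longrightarrow> 0 < h s"
  obtains \<delta> where "0 < \<delta>" and "\<And>s. s \<in> C \<Longrightarrow> \<delta> \<le> h s"
proof (cases "C = {}")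
  case False
  then obtain s\<^sub>0 where "s\<^sub>0 \<in> C" and "\<And>s. s \<in> C \<Longrightarrow> h s\<^sub>0 \<le> h s"
    using continuous_attains_inf[OF assms(1) _ assms(2)] by blast
  then show thesis
    using that[of "h s\<^sub>0"] assms(3) by blast
qed (use that[of 1] in simp)

lemma exists_dominated_approximation:
  fixes h :: "'s::topological_space \<Rightarrow> real" and d :: "'s \<Rightarrow>\<^sub>C real"
  assumes "compact (UNIV :: 's set)" and "continuous_on UNIV h" and h_nonneg: "\<And>s. 0 \<le> h s"
    and d_vanishes: "\<And>s. h s = 0 \<Longrightarrow> d s = 0" and "0 < e"
  obtains n and d' :: "'s \<Rightarrow>\<^sub>C real"
  where "0 < n" and "\<And>s. \<bar>d' s\<bar> \<le> n * h s" and "norm (d' - d) \<le> e"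
proof -
  define C where "C = {s. e \<le> \<bar>d s\<bar>}"
  have "closed C"
    unfolding C_def by (intro closed_Collect_le continuous_intros) simp
  then have "compact C"
    using compact_Int_closed[OF assms(1)] by simp
  moreover have "0 < h s" if "s \<in> C" for s
    using h_nonneg[of s] d_vanishes[of s] \<open>0 < e\<close> that unfolding C_def by fastforce
  ultimately obtain \<delta> where "0 < \<delta>" and \<delta>: "\<And>s. s \<in> C \<Longrightarrow> \<delta> \<le> h s"
    using compact_continuous_pos_bounded_below continuous_on_subset[OF assms(2)] by blast
  define n where "n = (norm d + 1) / \<delta>"
  have "0 < n"
    using \<open>0 < \<delta>\<close> by (simp add: n_def add_nonneg_pos)
  define clamp where "clamp s = max (- (n * h s)) (min (n * h s) (d s))" for s
  have nh_nonneg: "0 \<le> n * h s" for s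
    using h_nonneg[of s] \<open>0 < n\<close> by simp
  have "clamp \<in> bcontfun"
  proof (rule bcontfun_normI)
    show "continuous_on UNIV clamp"
      unfolding clamp_def using assms(2) by (intro continuous_intros) auto
    show "norm (clamp s) \<le> norm d" for s
      using norm_bounded[of d s] nh_nonneg[of s] unfolding clamp_def by simp
  qed
  then have clamp_apply: "Bcontfun clamp s = clamp s" for s
    by (simp add: Bcontfun_inverse)
  have "\<bar>clamp s\<bar> \<le> n * h s" for s
    using nh_nonneg[of s] unfolding clamp_def by linarith
  moreover have "\<bar>clamp s - d s\<bar> \<le> e" for s
  proof (cases "s \<in> C")
    case True
    have "norm d + 1 = n * \<delta>"
      using \<open>0 < \<delta>\<close> by (simp add: n_def)
    also have "\<dots> \<le> n * h s"
      using \<delta>[OF True] \<open>0 < n\<close> by simp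
    finally have "clamp s = d s"
      using norm_bounded[of d s] unfolding clamp_def by simp
    then show ?thesis
      using \<open>0 < e\<close> by simp
  next
    case False
    then show ?thesis
      using nh_nonneg[of s] unfolding clamp_def C_def by simp
  qed
  then have "norm (Bcontfun clamp - d) \<le> e"
    by (intro norm_bound) (simp add: clamp_apply)
  ultimately show thesis
    using that[of n "Bcontfun clamp"] \<open>0 < n\<close> by (simp add: clamp_apply)
qed

locale damped_retraction =
  fixes i :: "'k::topological_space \<Rightarrow> 's::topological_space"
    and \<rho> :: "'s \<Rightarrow> 'k" and h :: "'s \<Rightarrow> real"
  assumes continuous_i: "continuous_on UNIV i"
    and continuous_\<rho>: "continuous_on UNIV \<rho>"
    and \<rho>_i: "\<And>k. \<rho> (i k) = k"
    and continuous_h: "continuous_on UNIV h"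
    and h_nonneg: "\<And>s. 0 \<le> h s"
    and h_le_1: "\<And>s. h s \<le> 1"
    and h_eq_0_iff: "\<And>s. h s = 0 \<longleftrightarrow> s \<in> range i"
begin

definition extension :: "('k \<Rightarrow>\<^sub>C real) \<Rightarrow>\<^sub>L ('s \<Rightarrow>\<^sub>C real)" where
  "extension = Blinfun (\<lambda>f :: 'k \<Rightarrow>\<^sub>C real. Bcontfun (\<lambda>s. f (\<rho> s) * (1 - h s)))"

definition restriction :: "('s \<Rightarrow>\<^sub>C real) \<Rightarrow>\<^sub>L ('k \<Rightarrow>\<^sub>C real)" where
  "restriction = Blinfun (\<lambda>g :: 's \<Rightarrow>\<^sub>C real. Bcontfun (\<lambda>k. g (i k)))"

lemma h_i [simp]: "h (i k) = 0"
  using h_eq_0_iff by simp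

lemma abs_damped_le_norm:
  fixes f :: "'k \<Rightarrow>\<^sub>C real"
  shows "\<bar>f (\<rho> s) * (1 - h s)\<bar> \<le> norm f"
proof -
  have "\<bar>f (\<rho> s) * (1 - h s)\<bar> \<le> \<bar>f (\<rho> s)\<bar>"
    using h_nonneg[of s] h_le_1[of s] by (simp add: abs_mult mult_left_le)
  then show ?thesis
    using norm_bounded[of f "\<rho> s"] by simp
qed

lemma extension_apply [simp]: "extension f s = f (\<rho> s) * (1 - h s)"
proof -
  define D where "D = (\<lambda>f :: 'k \<Rightarrow>\<^sub>C real. Bcontfun (\<lambda>s. f (\<rho> s) * (1 - h s)))"
  have D_apply [simp]: "D f s = f (\<rho> s) * (1 - h s)" for f s
  proof -
    have "(\<lambda>s. f (\<rho> s) * (1 - h s)) \<in> bcontfun"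
    proof (rule bcontfun_normI)
      show "continuous_on UNIV (\<lambda>s. f (\<rho> s) * (1 - h s))"
        using continuous_on_compose2[OF _ continuous_\<rho>, of UNIV f] continuous_h
        by (intro continuous_intros) auto
      show "norm (f (\<rho> s) * (1 - h s)) \<le> norm f" for s
        using abs_damped_le_norm by simp
    qed
    then show ?thesis
      by (simp add: D_def Bcontfun_inverse)
  qed
  have "bounded_linear D"
  proof (rule bounded_linear_intro[where K = 1])
    show "norm (D f) \<le> norm f * 1" for f
      by simp (rule norm_bound, simp add: abs_damped_le_norm)
  qed (auto intro!: bcontfun_eqI simp: algebra_simps)
  then show ?thesis
    unfolding extension_def D_def[symmetric] by (simp add: bounded_linear_Blinfun_apply)
qed

lemma restriction_apply [simp]: "restriction g k = g (i k)"
proof -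
  define R where "R = (\<lambda>g :: 's \<Rightarrow>\<^sub>C real. Bcontfun (\<lambda>k. g (i k)))"
  have R_apply [simp]: "R g k = g (i k)" for g k
  proof -
    have "(\<lambda>k. g (i k)) \<in> bcontfun"
    proof (rule bcontfun_normI)
      show "continuous_on UNIV (\<lambda>k. g (i k))"
        using continuous_on_compose2[OF _ continuous_i, of UNIV g] by simp
      show "norm (g (i k)) \<le> norm g" for k
        by (rule norm_bounded)
    qed
    then show ?thesis
      by (simp add: R_def Bcontfun_inverse)
  qed
  have "bounded_linear R"
    by (rule bounded_linear_intro[where K = 1])
      (auto intro!: bcontfun_eqI norm_bound simp del: real_norm_def simp: norm_bounded)
  then show ?thesis
    unfolding restriction_def R_def[symmetric] by (simp add: bounded_linear_Blinfun_apply)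
qed

lemma restriction_extension: "restriction (extension f) = f"
  by (rule bcontfun_eqI) (simp add: \<rho>_i)

lemma norm_extension: "norm (extension f) = norm f"
proof (rule antisym)
  show "norm (extension f) \<le> norm f"
    by (rule norm_bound) (simp add: abs_damped_le_norm)
  show "norm f \<le> norm (extension f)"
  proof (rule norm_bound)
    show "norm (f k) \<le> norm (extension f)" for k
      using norm_bounded[of "extension f" "i k"] by (simp add: \<rho>_i)
  qed
qed

lemma norm_restriction_le: "norm restriction \<le> 1"
proof (rule norm_blinfun_bound)
  show "norm (restriction g) \<le> 1 * norm g" for g
    by simp (rule norm_bound, use norm_bounded[of g] in simp)
qed simp

lemma norm_extension_add_le_1:
  fixes g :: "'s \<Rightarrow>\<^sub>C real"
  assumes "norm f \<le> 1" and "\<And>s. \<bar>g s\<bar> \<le> h s"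
  shows "norm (extension f + g) \<le> 1"
proof (rule norm_bound)
  fix s
  have "\<bar>f (\<rho> s)\<bar> \<le> 1"
    using norm_bounded[of f "\<rho> s"] assms(1) by simp
  then have "\<bar>f (\<rho> s) * (1 - h s)\<bar> \<le> 1 - h s"
    using h_le_1[of s] by (simp add: abs_mult mult_left_le_one_le)
  then show "norm ((extension f + g) s) \<le> 1"
    using assms(2)[of s] by simp
qed

lemma functional_nonpos_on_restriction_kernel:
  fixes \<phi> :: "('s \<Rightarrow>\<^sub>C real) \<Rightarrow>\<^sub>L real"
    and d :: "'s \<Rightarrow>\<^sub>C real"
  assumes "compact (UNIV :: 's set)" and norm_\<phi>: "norm \<phi> \<le> norm (\<phi> o\<^sub>L extension)"
    and "restriction d = 0"
  shows "\<phi> d \<le> 0"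
proof (rule ccontr)
  assume "\<not> \<phi> d \<le> 0"
  then have "0 < \<phi> d"
    by simp
  have d_vanishes: "d s = 0" if "h s = 0" for s
  proof -
    obtain k where "s = i k"
      using \<open>h s = 0\<close> h_eq_0_iff by blast
    then show ?thesis
      using restriction_apply[of d k] \<open>restriction d = 0\<close> by simp
  qed
  have "0 < \<phi> d / (norm \<phi> + 1)"
    using \<open>0 < \<phi> d\<close> by (simp add: add_nonneg_pos)
  then obtain n and d' :: "'s \<Rightarrow>\<^sub>C real" where "0 < n" and dominated: "\<And>s. \<bar>d' s\<bar> \<le> n * h s"
    and close: "norm (d' - d) \<le> \<phi> d / (norm \<phi> + 1)"
    using exists_dominated_approximation[OF assms(1) continuous_h h_nonneg d_vanishes] by blast
  have "\<phi> d - \<phi> d' \<le> norm \<phi> * norm (d' - d)"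
    using norm_blinfun[of \<phi> "d' - d"] by (simp add: blinfun.bilinear_simps)
  also have "\<dots> \<le> norm \<phi> * (\<phi> d / (norm \<phi> + 1))"
    using mult_left_mono[OF close norm_ge_zero] by simp
  also have "\<dots> < \<phi> d"
    using \<open>0 < \<phi> d\<close> by (simp add: field_simps add_pos_nonneg)
  finally have "0 < \<phi> d' / n"
    using \<open>0 < n\<close> by simp
  then obtain f where "norm f \<le> 1"
    and almost_norm: "norm (\<phi> o\<^sub>L extension) - \<phi> d' / n < (\<phi> o\<^sub>L extension) f"
    using norm_blinfun_almost_attained by blast
  have "norm (extension f + d' /\<^sub>R n) \<le> 1"
  proof (rule norm_extension_add_le_1[OF \<open>norm f \<le> 1\<close>])
    show "\<bar>(d' /\<^sub>R n) s\<bar> \<le> h s" for s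
      using dominated[of s] \<open>0 < n\<close> by (simp add: field_simps)
  qed
  then have "\<phi> (extension f + d' /\<^sub>R n) \<le> norm \<phi>"
    using norm_blinfun[of \<phi> "extension f + d' /\<^sub>R n"]
    by (metis abs_le_D1 mult_left_le norm_ge_zero order_trans real_norm_def)
  moreover have "\<phi> (extension f + d' /\<^sub>R n) = (\<phi> o\<^sub>L extension) f + \<phi> d' / n"
    by (simp add: blinfun.bilinear_simps divide_inverse_commute)
  ultimately show False
    using norm_\<phi> almost_norm by linarith
qed

lemma functional_vanishes_on_restriction_kernel:
  fixes \<phi> :: "('s \<Rightarrow>\<^sub>C real) \<Rightarrow>\<^sub>L real" and d :: "'s \<Rightarrow>\<^sub>C real"
  assumes "compact (UNIV :: 's set)" and "norm \<phi> \<le> norm (\<phi> o\<^sub>L extension)"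
    and "restriction d = 0"
  shows "\<phi> d = 0"
  using functional_nonpos_on_restriction_kernel[OF assms]
    functional_nonpos_on_restriction_kernel[OF assms(1,2), of "- d"] assms(3)
  by (simp add: blinfun.bilinear_simps)

end

theorem proposition6p24:
  fixes i :: "'k::t2_space \<Rightarrow> 's::t2_space"
  assumes "compact (UNIV :: 's set)"
    and "embedding_map euclidean euclidean i"
    and "closedin euclidean (range i)"
    and "range i retract_of_space euclidean"
    and "zero_set_of (range i) euclidean"
  shows "\<exists>T :: ('k \<Rightarrow>\<^sub>C real) \<Rightarrow>\<^sub>L ('s \<Rightarrow>\<^sub>C real). U_embedding T"
proof -
  obtain \<rho> where \<rho>: "continuous_map euclidean euclidean \<rho>"
    "\<And>k. k \<in> topspace euclidean \<Longrightarrow> \<rho> (i k) = k"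
    using retraction_left_inverse_of_embedding[OF assms(2)] assms(4) by auto
  obtain h where h: "continuous_map euclidean euclideanreal h"
    "\<And>s. 0 \<le> h s" "\<And>s. h s \<le> 1" "range i = {s \<in> topspace euclidean. h s = 0}"
    using zero_set_ofE[OF assms(5)] by blast
  interpret damped_retraction i \<rho> h
    using \<rho> h embedding_map_imp_continuous_map[OF assms(2)] by unfold_locales auto
  have "U_embedding extension"
    by (rule U_embeddingI[OF norm_extension restriction_extension norm_restriction_le
          functional_vanishes_on_restriction_kernel[OF assms(1)]])
  then show ?thesis
    by blast
qed
end
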